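(* Let $A$ be a finite set and let $\rho\subseteq A^n$, $n\ge3$, be an essential key relation preserved by a near-unanimity operation. Then the pattern of $\rho$ is the trivial equivalence relation on $\{1,\dots,n\}$.
   Context: A near-unanimity operation is an $m$-ary operation $f$ on $A$ ($m\ge 3$) with $f(y,x,\dots,x)=f(x,y,x,\dots,x)=\dots=f(x,\dots,x,y)=x$ for all $x,y$; it preserves $\rho$ if applying it coordinatewise to any $m$ tuples of $\rho$ gives a tuple of $\rho$. A unary vector-function is a tuple $\Psi=(\psi_1,\dots,\psi_n)$ of maps $\psi_i:A\to A$ acting coordinatewise; it preserves $\rho$ if $\Psi(\rho)\subseteq\rho$. $\rho$ is a key relation if there is $\beta\in A^n\setminus\rho$ (a key tuple) such that every $\alpha\in A^n\setminus\rho$ is mapped to $\beta$ by some unary vector-function preserving $\rho$. $\rho$ is essential if it cannot be written as a conjunction of relations of smaller arities. The pattern of $\rho$: for $i\ne j$, $i\overset{\rho}{\sim}j$ iff there do NOT exist $a_1,\dots,a_n,b_i,b_j\in A$ with $(a_1,\dots,a_n)\notin\rho$ while the tuples obtained by replacing $a_i$ by $b_i$, replacing $a_j$ by $b_j$, and replacing both, all lie in $\rho$; and $i\overset{\rho}{\sim}i$ always. *)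

theory Defs
  imports Main
begin

text \<open>Tuples of length n over A are lists; coordinates are indexed 0..n-1
  (instead of 1..n).\<close>

definition tuples :: "'a set \<Rightarrow> nat \<Rightarrow> 'a list set" where
  "tuples A n = {xs. length xs = n \<and> set xs \<subseteq> A}"

definition near_unanimity :: "'a set \<Rightarrow> nat \<Rightarrow> ('a list \<Rightarrow> 'a) \<Rightarrow> bool" where
  "near_unanimity A m f \<longleftrightarrow> m \<ge> 3 \<and> (\<forall>xs\<in>tuples A m. f xs \<in> A) \<and>
     (\<forall>x\<in>A. \<forall>y\<in>A. \<forall>k<m. f ((replicate m x)[k := y]) = x)"

definition apply_op :: "nat \<Rightarrow> ('a list \<Rightarrow> 'a) \<Rightarrow> 'a list list \<Rightarrow> 'a list" where
  "apply_op n f rs = map (\<lambda>i. f (map (\<lambda>r. r ! i) rs)) [0..<n]"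

definition op_preserves :: "nat \<Rightarrow> nat \<Rightarrow> ('a list \<Rightarrow> 'a) \<Rightarrow> 'a list set \<Rightarrow> bool" where
  "op_preserves n m f \<rho> \<longleftrightarrow>
     (\<forall>rs. length rs = m \<and> set rs \<subseteq> \<rho> \<longrightarrow> apply_op n f rs \<in> \<rho>)"

definition uvf :: "'a set \<Rightarrow> nat \<Rightarrow> (nat \<Rightarrow> 'a \<Rightarrow> 'a) \<Rightarrow> bool" where
  "uvf A n \<psi> \<longleftrightarrow> (\<forall>i<n. \<psi> i ` A \<subseteq> A)"

definition apply_uvf :: "(nat \<Rightarrow> 'a \<Rightarrow> 'a) \<Rightarrow> 'a list \<Rightarrow> 'a list" where
  "apply_uvf \<psi> xs = map (\<lambda>i. \<psi> i (xs ! i)) [0..<length xs]"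

definition uvf_preserves :: "(nat \<Rightarrow> 'a \<Rightarrow> 'a) \<Rightarrow> 'a list set \<Rightarrow> bool" where
  "uvf_preserves \<psi> \<rho> \<longleftrightarrow> apply_uvf \<psi> ` \<rho> \<subseteq> \<rho>"

definition key_relation :: "'a set \<Rightarrow> nat \<Rightarrow> 'a list set \<Rightarrow> bool" where
  "key_relation A n \<rho> \<longleftrightarrow> \<rho> \<subseteq> tuples A n \<and>
     (\<exists>\<beta>\<in>tuples A n - \<rho>. \<forall>\<alpha>\<in>tuples A n - \<rho>.
        \<exists>\<psi>. uvf A n \<psi> \<and> uvf_preserves \<psi> \<rho> \<and> apply_uvf \<psi> \<alpha> = \<beta>)"

text \<open>rho is a conjunction of relations of smaller arities: a family C of
  constraints (idx, sigma), where sigma is a relation on A of arity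
  length idx < n applied to the coordinates listed in idx.\<close>
definition decomposable :: "'a set \<Rightarrow> nat \<Rightarrow> 'a list set \<Rightarrow> bool" where
  "decomposable A n \<rho> \<longleftrightarrow>
     (\<exists>C :: (nat list \<times> 'a list set) set.
        (\<forall>(idx, \<sigma>)\<in>C. length idx < n \<and> set idx \<subseteq> {..<n} \<and> \<sigma> \<subseteq> tuples A (length idx)) \<and>
        \<rho> = {xs\<in>tuples A n. \<forall>(idx, \<sigma>)\<in>C. map (\<lambda>i. xs ! i) idx \<in> \<sigma>})"

definition essential :: "'a set \<Rightarrow> nat \<Rightarrow> 'a list set \<Rightarrow> bool" where
  "essential A n \<rho> \<longleftrightarrow> \<rho> \<subseteq> tuples A n \<and> \<not> decomposable A n \<rho>"

definition pattern :: "'a set \<Rightarrow> nat \<Rightarrow> 'a list set \<Rightarrow> (nat \<times> nat) set" where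
  "pattern A n \<rho> = {(i, j). i < n \<and> j < n \<and> (i = j \<or>
     \<not> (\<exists>a\<in>tuples A n. \<exists>bi\<in>A. \<exists>bj\<in>A. a \<notin> \<rho> \<and> a[i := bi] \<in> \<rho> \<and>
          a[j := bj] \<in> \<rho> \<and> a[i := bi, j := bj] \<in> \<rho>))}"

end

theory Submission
  imports Defs
begin

text \<open>Call a non-tuple repairable if each of its coordinates can be changed
  so as to land in \<open>\<rho>\<close>. If no non-tuple were repairable, \<open>\<rho>\<close> would be the conjunction of its
  projections forgetting one coordinate, so an essential \<open>\<rho>\<close> has a repairable non-tuple, and
  the key tuple \<open>\<beta>\<close> inherits repairability. Now suppose \<open>i \<sim> j\<close> with \<open>i \<noteq> j\<close> and fix a third
  coordinate \<open>l\<close>. Restricted to coordinates \<open>i, j\<close> around \<open>\<beta>\<close>, the relation is rectangular, so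
  repairing \<open>\<beta>\<close> at \<open>i\<close> and at \<open>j\<close> simultaneously gives a non-tuple, which a unary
  vector-function sends back to \<open>\<beta>\<close>. The images of the repaired tuples, combined by the
  near-unanimity operation in a staircase pattern, give a zigzag path in the \<open>(i, j)\<close>-slice that
  connects the two sides of \<open>\<beta>\<close>; rectangularity then forces \<open>\<beta> \<in> \<rho>\<close>.\<close>

definition repairable :: "'a set \<Rightarrow> 'a list set \<Rightarrow> 'a list \<Rightarrow> bool" where
  "repairable A \<rho> a \<longleftrightarrow> (\<forall>k<length a. \<exists>b\<in>A. a[k := b] \<in> \<rho>)"

lemma nth_in_tuples: "xs \<in> tuples A n \<Longrightarrow> k < n \<Longrightarrow> xs ! k \<in> A"
  by (auto simp: tuples_def)

subsection \<open>Essential relations have repairable non-tuples\<close>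

definition other_coords :: "nat \<Rightarrow> nat \<Rightarrow> nat list" where
  "other_coords n k = [0..<k] @ [Suc k..<n]"

lemma set_other_coords: "k < n \<Longrightarrow> set (other_coords n k) = {..<n} - {k}"
  by (auto simp: other_coords_def)

lemma length_other_coords: "k < n \<Longrightarrow> length (other_coords n k) = n - 1"
  by (simp add: other_coords_def)

lemma eq_update_if_agree_on_other_coords:
  assumes "length x = n" "length y = n" "k < n"
    and "map ((!) x) (other_coords n k) = map ((!) y) (other_coords n k)"
  shows "y = x[k := y ! k]"
proof (rule nth_equalityI)
  fix c assume "c < length y"
  then show "y ! c = x[k := y ! k] ! c"
    using assms set_other_coords[of k n] by (cases "c = k") (auto simp: map_eq_conv)
qed (use assms in simp)

lemma decomposable_if_no_repairable:
  assumes sub: "\<rho> \<subseteq> tuples A n" and "n \<ge> 1"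
    and no_rep: "\<And>a. a \<in> tuples A n - \<rho> \<Longrightarrow> \<not> repairable A \<rho> a"
  shows "decomposable A n \<rho>"
proof -
  define proj where "proj k x = map ((!) x) (other_coords n k)" for k and x :: "'a list"
  define C where "C = (\<lambda>k. (other_coords n k, proj k ` \<rho>)) ` {..<n}"
  have "\<forall>(idx, \<sigma>)\<in>C. length idx < n \<and> set idx \<subseteq> {..<n} \<and> \<sigma> \<subseteq> tuples A (length idx)"
    using sub \<open>n \<ge> 1\<close>
    by (fastforce simp: C_def proj_def set_other_coords length_other_coords tuples_def)
  moreover have "\<rho> = {xs\<in>tuples A n. \<forall>(idx, \<sigma>)\<in>C. map ((!) xs) idx \<in> \<sigma>}"
  proof (intro equalityI subsetI)
    fix x assume "x \<in> \<rho>"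
    then show "x \<in> {xs\<in>tuples A n. \<forall>(idx, \<sigma>)\<in>C. map ((!) xs) idx \<in> \<sigma>}"
      using sub by (auto simp: C_def proj_def)
  next
    fix a assume a: "a \<in> {xs\<in>tuples A n. \<forall>(idx, \<sigma>)\<in>C. map ((!) xs) idx \<in> \<sigma>}"
    show "a \<in> \<rho>"
    proof (rule ccontr)
      assume "a \<notin> \<rho>"
      with a no_rep have "\<not> repairable A \<rho> a" by blast
      then obtain k where k: "k < n" and unrep: "\<forall>b\<in>A. a[k := b] \<notin> \<rho>"
        using a by (auto simp: repairable_def tuples_def)
      from a k obtain x where x: "x \<in> \<rho>" "proj k a = proj k x"
        by (fastforce simp: C_def proj_def)
      have "x = a[k := x ! k]"
        using x a k sub by (intro eq_update_if_agree_on_other_coords) (auto simp: proj_def tuples_def)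
      moreover have "x ! k \<in> A"
        using x(1) k sub by (blast intro: nth_in_tuples)
      ultimately show False
        using unrep x(1) by metis
    qed
  qed
  ultimately show ?thesis
    unfolding decomposable_def by blast
qed

lemma essential_obtains_repairable:
  assumes "essential A n \<rho>" "n \<ge> 1"
  obtains a where "a \<in> tuples A n - \<rho>" "repairable A \<rho> a"
  using assms decomposable_if_no_repairable unfolding essential_def by blast

lemma apply_uvf_update:
  "k < length a \<Longrightarrow> apply_uvf \<psi> (a[k := b]) = (apply_uvf \<psi> a)[k := \<psi> k b]"
  by (rule nth_equalityI) (auto simp: apply_uvf_def nth_list_update)

lemma repairable_apply_uvf:
  assumes "uvf A n \<psi>" "uvf_preserves \<psi> \<rho>" "length a = n" "repairable A \<rho> a"
  shows "repairable A \<rho> (apply_uvf \<psi> a)"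
  unfolding repairable_def
proof (intro allI impI)
  fix k assume "k < length (apply_uvf \<psi> a)"
  then have k: "k < n" using assms(3) by (simp add: apply_uvf_def)
  then obtain b where "b \<in> A" "a[k := b] \<in> \<rho>"
    using assms(3,4) by (auto simp: repairable_def)
  then show "\<exists>c\<in>A. (apply_uvf \<psi> a)[k := c] \<in> \<rho>"
    using assms k by (force simp: uvf_def uvf_preserves_def apply_uvf_update)
qed

subsection \<open>Zigzag paths\<close>

lemma rectangular_zigzag:
  fixes \<sigma> :: "'a \<Rightarrow> 'a \<Rightarrow> bool" and g :: "nat \<Rightarrow> 'a"
  assumes rect: "\<And>x y x' y'. \<sigma> x' y \<Longrightarrow> \<sigma> x y' \<Longrightarrow> \<sigma> x' y' \<Longrightarrow> \<sigma> x y"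
    and "\<sigma> a b" "\<sigma> (g 0) b"
    and even_edge: "\<And>k. even k \<Longrightarrow> \<sigma> (g k) (g (Suc k))"
    and odd_edge: "\<And>k. odd k \<Longrightarrow> \<sigma> (g (Suc k)) (g k)"
  shows "if even k then \<sigma> (g k) b else \<sigma> a (g k)"
proof (induction k)
  case 0
  then show ?case using \<open>\<sigma> (g 0) b\<close> by simp
next
  case (Suc k)
  show ?case
  proof (cases "even k")
    case True
    then show ?thesis
      using Suc.IH rect[of "g k" "g (Suc k)" a b] even_edge[of k] \<open>\<sigma> a b\<close> by simp
  next
    case False
    then show ?thesis
      using Suc.IH rect[of a b "g (Suc k)" "g k"] odd_edge[of k] \<open>\<sigma> a b\<close> by simp
  qed
qed

lemma near_unanimity_idempotent:
  assumes "near_unanimity A m f" "x \<in> A"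
  shows "f (replicate m x) = x"
proof -
  have "m > 0" "f ((replicate m x)[0 := x]) = x"
    using assms unfolding near_unanimity_def by auto
  moreover from \<open>m > 0\<close> have "(replicate m x)[0 := x] = replicate m x"
    by (simp add: list_update_same_conv)
  ultimately show ?thesis by simp
qed

text \<open>The four triples are combined by the near-unanimity operation in a staircase: in the
  \<open>k\<close>-th combination, row \<open>t\<close> uses the primed values left of the diagonal, the unprimed ones
  right of it, and a triple with third entry \<open>s\<close> or \<open>s'\<close> on it. The third column is thus
  constant \<open>r\<close> up to one entry, and near-unanimity returns \<open>r\<close>.\<close>

lemma near_unanimity_zigzag:
  fixes \<tau> :: "'a \<Rightarrow> 'a \<Rightarrow> 'a \<Rightarrow> bool"
  assumes nu: "near_unanimity A m f"
    and pres: "\<And>X Y Z. (\<And>t. t < m \<Longrightarrow> \<tau> (X t) (Y t) (Z t)) \<Longrightarrow>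
                 \<tau> (f (map X [0..<m])) (f (map Y [0..<m])) (f (map Z [0..<m]))"
    and A: "p \<in> A" "p' \<in> A" "r \<in> A" "s \<in> A" "s' \<in> A"
    and \<tau>: "\<tau> p' q r" "\<tau> p q' r" "\<tau> p' q' s'" "\<tau> p q s"
  obtains g where "g 0 = p'" "g (2 * m) = p"
    "\<And>k. even k \<Longrightarrow> \<tau> (g k) (g (Suc k)) r" "\<And>k. odd k \<Longrightarrow> \<tau> (g (Suc k)) (g k) r"
proof -
  define V where "V t k = (if k \<le> t then (if even k then p' else q) else (if even k then p else q'))"
    for t k :: nat
  define Z where "Z t k = (if t = k then (if even k then s' else s) else r)" for t k :: nat
  define g where "g k = f (map (\<lambda>t. V t k) [0..<m])" for k
  have const: "f (map (\<lambda>t. x) [0..<m]) = x" if "x \<in> A" for x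
    using near_unanimity_idempotent[OF nu that] by (simp add: map_replicate_const)
  have Z: "f (map (\<lambda>t. Z t k) [0..<m]) = r" for k
  proof (cases "k < m")
    case True
    have "map (\<lambda>t. Z t k) [0..<m] = (replicate m r)[k := (if even k then s' else s)]"
      using True by (intro nth_equalityI) (auto simp: Z_def nth_list_update)
    then show ?thesis
      using nu True A unfolding near_unanimity_def by auto
  next
    case False
    then have "map (\<lambda>t. Z t k) [0..<m] = map (\<lambda>t. r) [0..<m]"
      by (auto simp: Z_def)
    then show ?thesis using const[OF A(3)] by metis
  qed
  show thesis
  proof
    show "g 0 = p'"
      using const A by (simp add: g_def V_def)
    have "map (\<lambda>t. V t (2 * m)) [0..<m] = map (\<lambda>t. p) [0..<m]"
      by (auto simp: V_def)
    then show "g (2 * m) = p"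
      using const[OF A(1)] unfolding g_def by metis
    fix k
    have even_rows: "\<tau> (V t k) (V t (Suc k)) (Z t k)" if "even k" for t
      using that \<tau> by (cases k t rule: linorder_cases) (auto simp: V_def Z_def)
    have odd_rows: "\<tau> (V t (Suc k)) (V t k) (Z t k)" if "odd k" for t
      using that \<tau> by (cases k t rule: linorder_cases) (auto simp: V_def Z_def)
    show "\<tau> (g k) (g (Suc k)) r" if "even k"
      using pres[of "\<lambda>t. V t k" "\<lambda>t. V t (Suc k)", OF even_rows[OF that]]
      unfolding g_def Z .
    show "\<tau> (g (Suc k)) (g k) r" if "odd k"
      using pres[of "\<lambda>t. V t (Suc k)" "\<lambda>t. V t k", OF odd_rows[OF that]]
      unfolding g_def Z .
  qed
qed

subsection \<open>Slices through three coordinates\<close>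

lemma pattern_pair_closed:
  assumes "(i, j) \<in> pattern A n \<rho>" "i \<noteq> j" "a \<in> tuples A n" "x \<in> A" "y \<in> A"
    and "a[i := x] \<in> \<rho>" "a[j := y] \<in> \<rho>" "a[i := x, j := y] \<in> \<rho>"
  shows "a \<in> \<rho>"
  using assms unfolding pattern_def by blast

locale slice =
  fixes A :: "'a set" and n :: nat and \<beta> :: "'a list" and i j l :: nat
  assumes \<beta>_tuple: "\<beta> \<in> tuples A n"
    and distinct: "i \<noteq> j" "i \<noteq> l" "j \<noteq> l"
    and coords: "i < n" "j < n" "l < n"
begin

definition T :: "'a \<Rightarrow> 'a \<Rightarrow> 'a \<Rightarrow> 'a list" where
  "T x y z = map (\<lambda>c. if c = i then x else if c = j then y else if c = l then z else \<beta> ! c) [0..<n]"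

lemma length_T [simp]: "length (T x y z) = n"
  by (simp add: T_def)

lemma nth_T: "c < n \<Longrightarrow> T x y z ! c = (if c = i then x else if c = j then y else if c = l then z else \<beta> ! c)"
  by (simp add: T_def)

lemma T_update [simp]:
  "(T x y z)[i := x'] = T x' y z" "(T x y z)[j := y'] = T x y' z" "(T x y z)[l := z'] = T x y z'"
  using distinct coords by (auto intro!: nth_equalityI simp: nth_T nth_list_update)

lemma length_\<beta>: "length \<beta> = n"
  using \<beta>_tuple by (simp add: tuples_def)

lemma \<beta>_eq_T: "\<beta> = T (\<beta> ! i) (\<beta> ! j) (\<beta> ! l)"
  by (rule nth_equalityI) (simp_all add: nth_T length_\<beta>)

lemma T_inject:
  assumes "T x y z = T x' y' z'"
  shows "x = x'" "y = y'" "z = z'"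
  using arg_cong[where f = "\<lambda>xs. xs ! i", OF assms] arg_cong[where f = "\<lambda>xs. xs ! j", OF assms]
    arg_cong[where f = "\<lambda>xs. xs ! l", OF assms] coords distinct
  by (simp_all add: nth_T)

lemma T_in_tuples_iff: "T x y z \<in> tuples A n \<longleftrightarrow> x \<in> A \<and> y \<in> A \<and> z \<in> A"
proof
  assume "T x y z \<in> tuples A n"
  then have "T x y z ! i \<in> A" "T x y z ! j \<in> A" "T x y z ! l \<in> A"
    using nth_in_tuples coords by blast+
  then show "x \<in> A \<and> y \<in> A \<and> z \<in> A"
    using coords distinct by (simp add: nth_T)
next
  assume "x \<in> A \<and> y \<in> A \<and> z \<in> A"
  then show "T x y z \<in> tuples A n"
    using \<beta>_tuple nth_in_tuples[OF \<beta>_tuple] by (auto simp: tuples_def T_def)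
qed

lemma slice_rectangular:
  assumes "(i, j) \<in> pattern A n \<rho>" "\<rho> \<subseteq> tuples A n"
    and "T x' y z \<in> \<rho>" "T x y' z \<in> \<rho>" "T x' y' z \<in> \<rho>"
  shows "T x y z \<in> \<rho>"
proof -
  have "x \<in> A" "y \<in> A" "z \<in> A" "x' \<in> A" "y' \<in> A"
    using assms(2-5) T_in_tuples_iff by blast+
  then show ?thesis
    using assms pattern_pair_closed[of i j A n \<rho> "T x y z" x' y'] distinct T_in_tuples_iff
    by simp
qed

lemma apply_op_T:
  assumes "\<And>x. x \<in> A \<Longrightarrow> f (replicate m x) = x"
  shows "apply_op n f (map (\<lambda>t. T (X t) (Y t) (Z t)) [0..<m]) =
         T (f (map X [0..<m])) (f (map Y [0..<m])) (f (map Z [0..<m]))"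
proof (rule nth_equalityI)
  fix c assume "c < length (apply_op n f (map (\<lambda>t. T (X t) (Y t) (Z t)) [0..<m]))"
  then have c: "c < n" by (simp add: apply_op_def)
  then show "apply_op n f (map (\<lambda>t. T (X t) (Y t) (Z t)) [0..<m]) ! c =
             T (f (map X [0..<m])) (f (map Y [0..<m])) (f (map Z [0..<m])) ! c"
    using assms[OF nth_in_tuples[OF \<beta>_tuple c]]
    by (simp add: apply_op_def nth_T comp_def map_replicate_const)
qed (simp add: apply_op_def)

lemma slice_preserved:
  assumes "near_unanimity A m f" "op_preserves n m f \<rho>"
    and "\<And>t. t < m \<Longrightarrow> T (X t) (Y t) (Z t) \<in> \<rho>"
  shows "T (f (map X [0..<m])) (f (map Y [0..<m])) (f (map Z [0..<m])) \<in> \<rho>"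
proof -
  have "apply_op n f (map (\<lambda>t. T (X t) (Y t) (Z t)) [0..<m]) \<in> \<rho>"
    using assms(3) by (intro assms(2)[unfolded op_preserves_def, rule_format]) auto
  then show ?thesis
    using apply_op_T near_unanimity_idempotent[OF assms(1)] by metis
qed

text \<open>A vector-function sending some \<open>T x y z\<close> to \<open>\<beta>\<close> fixes \<open>\<beta>\<close> outside \<open>i, j, l\<close>, hence
  maps the slice into itself.\<close>

lemma apply_uvf_T:
  assumes "apply_uvf \<psi> (T x y z) = \<beta>"
  shows "apply_uvf \<psi> (T x' y' z') = T (\<psi> i x') (\<psi> j y') (\<psi> l z')"
proof -
  have "\<psi> c (T x y z ! c) = \<beta> ! c" if "c < n" for c
    using arg_cong[where f = "\<lambda>xs. xs ! c", OF assms] that by (simp add: apply_uvf_def)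
  then have "\<psi> c (\<beta> ! c) = \<beta> ! c" if "c < n" "c \<noteq> i" "c \<noteq> j" "c \<noteq> l" for c
    using that by (metis nth_T)
  then show ?thesis
    by (auto intro!: nth_equalityI simp: apply_uvf_def nth_T)
qed

lemma key_map_images:
  assumes pat: "(i, j) \<in> pattern A n \<rho>" and sub: "\<rho> \<subseteq> tuples A n"
    and \<beta>: "\<beta> = T p q r" "\<beta> \<notin> \<rho>"
    and key: "\<forall>\<alpha>\<in>tuples A n - \<rho>. \<exists>\<psi>. uvf A n \<psi> \<and> uvf_preserves \<psi> \<rho> \<and> apply_uvf \<psi> \<alpha> = \<beta>"
    and A: "ci \<in> A" "cj \<in> A" "r \<in> A" "p \<in> A" "s \<in> A"
    and repaired: "T ci q r \<in> \<rho>" "T p cj r \<in> \<rho>" "T p q s \<in> \<rho>"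
  obtains p' q' s' where "p' \<in> A" "s' \<in> A"
    "T p' q r \<in> \<rho>" "T p q' r \<in> \<rho>" "T p' q' s' \<in> \<rho>"
proof -
  have "T ci cj r \<notin> \<rho>"
    using slice_rectangular[OF pat sub] repaired(1,2) \<beta> by metis
  then have "T ci cj r \<in> tuples A n - \<rho>"
    using A T_in_tuples_iff by blast
  then obtain \<psi> where \<psi>: "uvf A n \<psi>" "uvf_preserves \<psi> \<rho>" "apply_uvf \<psi> (T ci cj r) = \<beta>"
    using key by blast
  have \<psi>_T: "apply_uvf \<psi> (T x y z) = T (\<psi> i x) (\<psi> j y) (\<psi> l z)" for x y z
    using apply_uvf_T[OF \<psi>(3)] .
  have \<psi>_moves: "\<psi> i ci = p" "\<psi> j cj = q" "\<psi> l r = r"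
    using T_inject \<psi>_T[of ci cj r] \<psi>(3) \<beta>(1) by metis+
  have \<psi>_maps: "T (\<psi> i x) (\<psi> j y) (\<psi> l z) \<in> \<rho>" if "T x y z \<in> \<rho>" for x y z
    using \<psi>(2) \<psi>_T that unfolding uvf_preserves_def by (metis image_subset_iff)
  show thesis
  proof
    show "\<psi> i p \<in> A" "\<psi> l s \<in> A"
      using \<psi>(1) coords A unfolding uvf_def by auto
    show "T (\<psi> i p) q r \<in> \<rho>" "T p (\<psi> j q) r \<in> \<rho>" "T (\<psi> i p) (\<psi> j q) (\<psi> l s) \<in> \<rho>"
      using \<psi>_maps[OF repaired(2)] \<psi>_maps[OF repaired(1)] \<psi>_maps[OF repaired(3)] \<psi>_moves
      by simp_all
  qed
qed

lemma key_tuple_pattern_pair: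
  assumes sub: "\<rho> \<subseteq> tuples A n" and nu: "near_unanimity A m f" and op: "op_preserves n m f \<rho>"
    and \<beta>_out: "\<beta> \<notin> \<rho>" and rep: "repairable A \<rho> \<beta>"
    and key: "\<forall>\<alpha>\<in>tuples A n - \<rho>. \<exists>\<psi>. uvf A n \<psi> \<and> uvf_preserves \<psi> \<rho> \<and> apply_uvf \<psi> \<alpha> = \<beta>"
  shows "(i, j) \<notin> pattern A n \<rho>"
proof
  assume pat: "(i, j) \<in> pattern A n \<rho>"
  note rect = slice_rectangular[OF pat sub]
  define p q r where "p = \<beta> ! i" and "q = \<beta> ! j" and "r = \<beta> ! l"
  have \<beta>: "\<beta> = T p q r"
    unfolding p_def q_def r_def by (rule \<beta>_eq_T)
  have pqr: "p \<in> A" "q \<in> A" "r \<in> A"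
    unfolding p_def q_def r_def using \<beta>_tuple coords by (blast intro: nth_in_tuples)+
  have "\<beta>[i := c] = T c q r" "\<beta>[j := c] = T p c r" "\<beta>[l := c] = T p q c" for c
    using \<beta> T_update by metis+
  then obtain ci cj s where ci: "ci \<in> A" "T ci q r \<in> \<rho>" and cj: "cj \<in> A" "T p cj r \<in> \<rho>"
    and s: "s \<in> A" "T p q s \<in> \<rho>"
    using rep coords unfolding repairable_def length_\<beta> by metis
  obtain p' q' s' where p's': "p' \<in> A" "s' \<in> A"
    and start: "T p' q r \<in> \<rho>" and "T p q' r \<in> \<rho>" "T p' q' s' \<in> \<rho>"
    by (rule key_map_images[OF pat sub \<beta> \<beta>_out key ci(1) cj(1) pqr(3,1) s(1) ci(2) cj(2) s(2)])
  then obtain g where g: "g 0 = p'" "g (2 * m) = p"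
    "\<And>k. even k \<Longrightarrow> T (g k) (g (Suc k)) r \<in> \<rho>" "\<And>k. odd k \<Longrightarrow> T (g (Suc k)) (g k) r \<in> \<rho>"
    using near_unanimity_zigzag[where \<tau> = "\<lambda>x y z. T x y z \<in> \<rho>" and p = p and p' = p'
        and q = q and q' = q' and r = r and s = s and s' = s',
        OF nu slice_preserved[OF nu op] pqr(1) p's'(1) pqr(3) s(1) p's'(2) _ _ _ s(2)]
    by blast
  have "T (g (2 * m)) q r \<in> \<rho>"
    using rectangular_zigzag[where \<sigma> = "\<lambda>x y. T x y r \<in> \<rho>" and a = ci and b = q and g = g
        and k = "2 * m", OF rect ci(2) _ g(3,4)] start g(1)
    by simp
  then show False
    using \<beta>_out by (simp add: g(2) \<beta>[symmetric])
qed

end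

lemma exists_third_coord:
  assumes "n \<ge> 3"
  obtains l :: nat where "l < n" "l \<noteq> i" "l \<noteq> j"
proof -
  have "\<exists>l::nat. l < 3 \<and> l \<noteq> i \<and> l \<noteq> j"
    by presburger
  then show thesis
    using that assms by (meson less_le_trans)
qed

theorem mainTheorem7:
  fixes A :: "'a set" and n m :: nat and \<rho> :: "'a list set" and f :: "'a list \<Rightarrow> 'a"
  assumes "finite A"
    and "n \<ge> 3"
    and "\<rho> \<subseteq> tuples A n"
    and "essential A n \<rho>"
    and "key_relation A n \<rho>"
    and "near_unanimity A m f"
    and "op_preserves n m f \<rho>"
  shows "pattern A n \<rho> = Id_on {..<n}"
proof (intro equalityI subsetI)
  fix x assume x: "x \<in> pattern A n \<rho>"
  obtain \<beta> where \<beta>: "\<beta> \<in> tuples A n - \<rho>" and key: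
    "\<forall>\<alpha>\<in>tuples A n - \<rho>. \<exists>\<psi>. uvf A n \<psi> \<and> uvf_preserves \<psi> \<rho> \<and> apply_uvf \<psi> \<alpha> = \<beta>"
    using assms(5) unfolding key_relation_def by blast
  obtain a where a: "a \<in> tuples A n - \<rho>" "repairable A \<rho> a"
    using essential_obtains_repairable assms(2,4) by (metis One_nat_def Suc_leD numeral_3_eq_3)
  have "repairable A \<rho> \<beta>"
    using key a repairable_apply_uvf by (fastforce simp: tuples_def)
  obtain i j where ij: "x = (i, j)" "i < n" "j < n"
    using x by (auto simp: pattern_def)
  moreover have "i = j"
  proof (rule ccontr)
    assume "i \<noteq> j"
    moreover obtain l where "l < n" "l \<noteq> i" "l \<noteq> j"
      using exists_third_coord assms(2) by blast
    ultimately interpret slice A n \<beta> i j l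
      using \<beta> ij by unfold_locales auto
    show False
      using key_tuple_pattern_pair assms(3,6,7) \<beta> \<open>repairable A \<rho> \<beta>\<close> key x ij by blast
  qed
  ultimately show "x \<in> Id_on {..<n}" by auto
qed (auto simp: pattern_def)

end
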